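(* Let $q,z,m,t$ be positive integers with $q\geq 2$, $z<q$ and $t<m$, and put $L=\lfloor\frac{q-1}{q-z}\rfloor$. Let $\mathbf{P}=(p_{\mathbf{a},\mathbf{b}})$ be the array (described in the context) with rows indexed by $$\mathcal{F}=\{\mathbf{a}=(a_0,\ldots,a_{m-1},\varepsilon_0,\ldots,\varepsilon_{t-1}) : a_0,\ldots,a_{m-1}\in\mathbb{Z}_q,\ \varepsilon_0,\ldots,\varepsilon_{t-1}\in\{0,1,\ldots,L-1\}\}$$ and columns indexed by $$\mathcal{K}=\{\mathbf{b}=(b_0,\ldots,b_{t-1},\delta_0,\ldots,\delta_{t-1}) : b_0,\ldots,b_{t-1}\in\mathbb{Z}_q,\ 0\leq\delta_0<\delta_1<\cdots<\delta_{t-1}<m\},$$ where for $\mathbf{a}\in\mathcal{F}$, $\mathbf{b}\in\mathcal{K}$: $p_{\mathbf{a},\mathbf{b}}=*$ if $a_{\delta_i}\in X_{b_i,z}:=\{b_i,b_i-1,\ldots,b_i-(z-1)\}$ for some $i\in\{0,\ldots,t-1\}$; otherwise $p_{\mathbf{a},\mathbf{b}}$ is the vector $(c_0,\ldots,c_{m-1},a_{\delta_0}-b_0-1,\ldots,a_{\delta_{t-1}}-b_{t-1}-1)$, where $c_{\delta_i}=b_i-\varepsilon_i(q-z)$ for $i\in\{0,\ldots,t-1\}$ and $c_l=a_l$ for $l\notin\{\delta_0,\ldots,\delta_{t-1}\}$ (all arithmetic modulo $q$). Then $\mathbf{P}$ is a $\big(\binom{m}{t}q^t,\ L^t q^m,\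 L^t(q^m-q^{m-t}(q-z)^t),\ (q-z)^t q^m\big)$ placement delivery array. In particular $Z/F=1-(\frac{q-z}{q})^t$ and $S/F=(q-z)^t/L^t$, so the associated coded caching scheme has $\frac{M}{N}=1-(\frac{q-z}{q})^t$ and rate $R=(q-z)^t/L^t$.
   Context: A $(K,F,Z,S)$ placement delivery array (PDA) is an $F\times K$ array whose entries are either a special symbol $*$ or one of $S$ distinct non-star symbols (identified with $1,\ldots,S$), such that: (C1) $*$ appears exactly $Z$ times in each column; (C2) each of the $S$ symbols occurs at least once; (C3) for any two distinct entries $p_{j_1,k_1}=p_{j_2,k_2}=s$ with $s$ a non-star symbol, we have $j_1\neq j_2$, $k_1\neq k_2$, and $p_{j_1,k_2}=p_{j_2,k_1}=*$. A $(K,F,Z,S)$ PDA yields an $F$-division coded caching scheme for $K$ users with memory ratio $M/N=Z/F$ and rate $R=S/F$. The non-star symbols of $\mathbf{P}$ are vectors in $\mathbb{Z}_q^{m+t}$. *)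

theory Defs
  imports Complex_Main
begin

text \<open>Generic placement delivery array. Rows are indexed by the finite set R,
  columns by the finite set C; an entry is None for the star symbol and
  Some s for a non-star symbol s.\<close>
definition is_PDA ::
  "'r set \<Rightarrow> 'c set \<Rightarrow> ('r \<Rightarrow> 'c \<Rightarrow> 's option) \<Rightarrow> nat \<Rightarrow> nat \<Rightarrow> nat \<Rightarrow> nat \<Rightarrow> bool" where
  "is_PDA R C p K F Z S \<longleftrightarrow>
     finite R \<and> finite C \<and> card C = K \<and> card R = F \<and>
     (\<forall>k\<in>C. card {j\<in>R. p j k = None} = Z) \<and>
     card {s. \<exists>j\<in>R. \<exists>k\<in>C. p j k = Some s} = S \<and>
     (\<forall>j1\<in>R. \<forall>j2\<in>R. \<forall>k1\<in>C. \<forall>k2\<in>C. \<forall>s.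
        p j1 k1 = Some s \<longrightarrow> p j2 k2 = Some s \<longrightarrow> (j1, k1) \<noteq> (j2, k2) \<longrightarrow>
        j1 \<noteq> j2 \<and> k1 \<noteq> k2 \<and> p j1 k2 = None \<and> p j2 k1 = None)"

definition modq :: "nat \<Rightarrow> int \<Rightarrow> nat" where
  "modq q x = nat (x mod int q)"

definition Xset :: "nat \<Rightarrow> nat \<Rightarrow> nat \<Rightarrow> nat set" where
  "Xset q z b = {modq q (int b - int j) | j. j < z}"

definition Lpar :: "nat \<Rightarrow> nat \<Rightarrow> nat" where
  "Lpar q z = (q - 1) div (q - z)"

definition rowsF :: "nat \<Rightarrow> nat \<Rightarrow> nat \<Rightarrow> nat \<Rightarrow> (nat list \<times> nat list) set" where
  "rowsF q z m t = {(a, eps). length a = m \<and> (\<forall>x\<in>set a. x < q) \<and>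
                     length eps = t \<and> (\<forall>x\<in>set eps. x < Lpar q z)}"

definition colsK :: "nat \<Rightarrow> nat \<Rightarrow> nat \<Rightarrow> (nat list \<times> nat list) set" where
  "colsK q m t = {(b, del). length b = t \<and> (\<forall>x\<in>set b. x < q) \<and>
                   length del = t \<and> sorted_wrt (<) del \<and> (\<forall>x\<in>set del. x < m)}"

definition pent :: "nat \<Rightarrow> nat \<Rightarrow> nat \<Rightarrow> nat \<Rightarrow> (nat list \<times> nat list) \<Rightarrow> (nat list \<times> nat list) \<Rightarrow> nat list option" where
  "pent q z m t row col =
    (case row of (a, eps) \<Rightarrow> case col of (b, del) \<Rightarrow>
      if \<exists>i<t. a ! (del ! i) \<in> Xset q z (b ! i) then None
      else Some (fold (\<lambda>i c. c[del ! i := modq q (int (b ! i) - int (eps ! i) * int (q - z))]) [0..<t] a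
                 @ map (\<lambda>i. modq q (int (a ! (del ! i)) - int (b ! i) - 1)) [0..<t]))"

end

theory Submission
  imports Defs
begin

text \<open>Column \<open>(b, \<delta>)\<close> has a star in row \<open>(a, \<epsilon>)\<close> exactly when some coordinate
  \<open>a(\<delta> i)\<close> falls into the window \<open>X(b i)\<close> of \<open>z\<close> residues; hence every column has
  \<open>L^t q^(m-t) (q-z)^t\<close> non-star rows. A non-star symbol keeps \<open>a\<close> off \<open>\<delta>\<close>, records at
  \<open>\<delta> i\<close> the shift \<open>b i - \<epsilon> i (q - z)\<close>, which lies in \<open>X(b i)\<close> because
  \<open>\<epsilon> i (q - z) < z\<close>, and appends \<open>a(\<delta> i) - b i - 1\<close>, which ranges exactly over \<open>Z_(q-z)\<close>;
  so the symbols are the words \<open>F @ U\<close> with \<open>F \<in> Z_q^m\<close> and \<open>U \<in> Z_(q-z)^t\<close>.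

  For C3, suppose two cells carry the same symbol and the crossing cell
  \<open>(a, \<epsilon>; b', \<delta>')\<close> is not a star. A position \<open>\<delta>' j\<close> outside \<open>\<delta>\<close> would put
  \<open>a(\<delta>' j)\<close> into its own window \<open>X(b' j)\<close>, so \<open>\<delta> = \<delta>'\<close>. As \<open>a(\<delta> i)\<close> then lies
  outside both windows \<open>X(b i)\<close> and \<open>X(b' i)\<close>, the shifts determine \<open>b i\<close> and
  \<open>\<epsilon> i\<close>, and the appended differences determine \<open>a\<close>.\<close>

lemma length_fold_list_update [simp]:
  "length (fold (\<lambda>i xs. xs[f i := g i]) is xs) = length xs"
  by (induction "is" arbitrary: xs) auto

lemma nth_fold_list_update_notin:
  "l \<notin> f ` set is \<Longrightarrow> fold (\<lambda>i xs. xs[f i := g i]) is xs ! l = xs ! l"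
  by (induction "is" arbitrary: xs) auto

lemma nth_fold_list_update_in:
  assumes "inj_on f (set is)" "i \<in> set is" "f i < length xs"
  shows "fold (\<lambda>i xs. xs[f i := g i]) is xs ! f i = g i"
  using assms
proof (induction "is" arbitrary: xs)
  case (Cons j "is")
  show ?case
  proof (cases "i \<in> set is")
    case True
    then show ?thesis
      using Cons by simp
  next
    case False
    then have "i = j" "f i \<notin> f ` set is"
      using Cons.prems by auto
    then show ?thesis
      using Cons.prems by (simp add: nth_fold_list_update_notin)
  qed
qed simp

lemma mem_listset_iff:
  "xs \<in> listset As \<longleftrightarrow> length xs = length As \<and> (\<forall>i<length As. xs ! i \<in> As ! i)"
proof (induction As arbitrary: xs)
  case (Cons A As)
  then show ?case
    by (cases xs) (auto simp: set_Cons_def nth_Cons split: nat.splits)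
qed simp

lemma card_listset: "card (listset As) = prod_list (map card As)"
proof (induction As)
  case (Cons A As)
  have "set_Cons A (listset As) = (\<lambda>(x, xs). x # xs) ` (A \<times> listset As)"
    by (auto simp: set_Cons_def)
  moreover have "inj_on (\<lambda>(x, xs). x # xs) (A \<times> listset As)"
    by (auto intro: inj_onI)
  ultimately show ?case
    using Cons by (simp add: card_image card_cartesian_product)
qed simp

lemma card_strict_sorted_lists:
  fixes A :: "'a::linorder set"
  assumes "finite A"
  shows "card {xs. sorted_wrt (<) xs \<and> length xs = k \<and> set xs \<subseteq> A} = card A choose k"
    (is "card ?Xs = _")
proof -
  have "bij_betw set ?Xs {S. S \<subseteq> A \<and> card S = k}"
  proof (rule bij_betw_imageI)
    show "inj_on set ?Xs"
      by (intro inj_onI) (simp add: strict_sorted_iff sorted_distinct_set_unique)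
    show "set ` ?Xs = {S. S \<subseteq> A \<and> card S = k}"
    proof (intro equalityI subsetI)
      fix S assume "S \<in> {S. S \<subseteq> A \<and> card S = k}"
      then have "S = set (sorted_list_of_set S)" "sorted_list_of_set S \<in> ?Xs"
        using assms finite_subset[of S A] by auto
      then show "S \<in> set ` ?Xs"
        by blast
    qed (auto simp: strict_sorted_iff distinct_card)
  qed
  then show ?thesis
    using assms by (simp add: bij_betw_same_card n_subsets)
qed

lemma modq_less: "0 < q \<Longrightarrow> modq q x < q"
  unfolding modq_def by (simp add: nat_less_iff)

lemma modq_of_nat [simp]: "modq q (int x) = x mod q"
  unfolding modq_def by (metis nat_int of_nat_mod)

lemma modq_eq_iff_dvd: "r < q \<Longrightarrow> modq q x = r \<longleftrightarrow> int q dvd x - int r"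
  unfolding modq_def by (auto simp: mod_eq_dvd_iff[symmetric] nat_eq_iff)

lemma modq_eq_modq_iff: "0 < q \<Longrightarrow> modq q x = modq q y \<longleftrightarrow> int q dvd x - y"
  unfolding modq_def by (simp add: mod_eq_dvd_iff[symmetric] eq_nat_nat_iff)

lemma eq_of_dvd_diff: "int q dvd int x - int y \<Longrightarrow> x < q \<Longrightarrow> y < q \<Longrightarrow> x = y"
  using modq_eq_iff_dvd[of y q "int x"] modq_eq_iff_dvd[of x q "int x"] by simp

lemma mem_Xset_iff:
  assumes "x < q" "z \<le> q"
  shows "x \<in> Xset q z b \<longleftrightarrow> modq q (int b - int x) < z"
proof -
  have iff: "x = modq q (int b - int j) \<longleftrightarrow> modq q (int b - int x) = j" if "j < z" for j
    using that assms modq_eq_iff_dvd[of x q "int b - int j"] modq_eq_iff_dvd[of j q "int b - int x"]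
    by (auto simp: algebra_simps)
  have "x \<in> Xset q z b \<longleftrightarrow> (\<exists>j<z. x = modq q (int b - int j))"
    unfolding Xset_def by blast
  also have "\<dots> \<longleftrightarrow> (\<exists>j<z. modq q (int b - int x) = j)"
    using iff by blast
  finally show ?thesis
    by blast
qed

lemma card_Xset:
  assumes "z \<le> q"
  shows "card (Xset q z b) = z"
proof -
  have "inj_on (\<lambda>j. modq q (int b - int j)) {..<z}"
    using assms by (intro inj_onI) (auto simp: modq_eq_modq_iff dest: eq_of_dvd_diff)
  moreover have "Xset q z b = (\<lambda>j. modq q (int b - int j)) ` {..<z}"
    unfolding Xset_def by auto
  ultimately show ?thesis
    by (simp add: card_image)
qed

lemma Xset_subset: "0 < q \<Longrightarrow> Xset q z b \<subseteq> {..<q}"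
  unfolding Xset_def by (auto simp: modq_less)

lemma Lpar_pos: "0 < z \<Longrightarrow> z < q \<Longrightarrow> 0 < Lpar q z"
  unfolding Lpar_def by (simp add: div_greater_zero_iff)

lemma mult_less_of_less_Lpar:
  assumes "e < Lpar q z" "z < q"
  shows "e * (q - z) < z"
proof -
  have "Suc e * (q - z) \<le> q - 1"
    using assms less_eq_div_iff_mult_less_eq[of "q - z" "Suc e" "q - 1"] unfolding Lpar_def by simp
  then show ?thesis
    using assms by simp
qed

lemma shift_mem_Xset: "e * (q - z) < z \<Longrightarrow> modq q (int b - int e * int (q - z)) \<in> Xset q z b"
  unfolding Xset_def by (auto intro!: exI[of _ "e * (q - z)"])

lemma modq_diff_Suc_eq:
  assumes "0 < q"
  shows "modq q (int x - int b - 1) = q - 1 - modq q (int b - int x)"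
proof -
  define k where "k = modq q (int b - int x)"
  have k: "k < q" "int q dvd int b - int x - int k"
    using assms modq_eq_iff_dvd[of k q] modq_less[of q] unfolding k_def by auto
  have "int x - int b - 1 - int (q - 1 - k) = - (int b - int x - int k) - int q"
    using k(1) by (simp add: of_nat_diff)
  then have "int q dvd int x - int b - 1 - int (q - 1 - k)"
    using k(2) by (metis dvd_diff dvd_minus_iff dvd_refl)
  then show ?thesis
    unfolding k_def[symmetric] using modq_eq_iff_dvd[of "q - 1 - k" q] assms by simp
qed

lemma notin_Xset_iff:
  assumes "x < q" "z \<le> q"
  shows "x \<notin> Xset q z b \<longleftrightarrow> modq q (int x - int b - 1) < q - z"
  using assms modq_less[of q "int b - int x"]
  by (auto simp: mem_Xset_iff modq_diff_Suc_eq)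

lemma modq_add_Suc_diff_cancel:
  assumes "u < q"
  shows "modq q (int (modq q (int u + int y + 1)) - int y - 1) = u"
proof -
  define x where "x = modq q (int u + int y + 1)"
  have "int q dvd (int u + int y + 1) - int x"
    using assms modq_eq_iff_dvd[of x q] modq_less[of q] unfolding x_def by auto
  moreover have "int x - int y - 1 - int u = - ((int u + int y + 1) - int x)"
    by simp
  ultimately show ?thesis
    unfolding x_def[symmetric] using assms modq_eq_iff_dvd[of u q] by (metis dvd_minus_iff)
qed

text \<open>Outside both windows, \<open>b - x\<close> and \<open>b' - x\<close> reduce into \<open>[z, q)\<close>, an interval shorter
  than the step \<open>q - z\<close> of the shifts, so no reduction modulo \<open>q\<close> can make two shifts meet.\<close>

lemma shift_inj:
  assumes "x < q" "b < q" "b' < q" "z < q"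
    and "x \<notin> Xset q z b" "x \<notin> Xset q z b'"
    and "e * (q - z) < z" "e' * (q - z) < z"
    and "modq q (int b - int e * int (q - z)) = modq q (int b' - int e' * int (q - z))"
  shows "b = b' \<and> e = e'"
proof -
  define D where "D = q - z"
  define k where "k = modq q (int b - int x)"
  define k' where "k' = modq q (int b' - int x)"
  have k: "z \<le> k" "k < q" "int q dvd int b - int x - int k"
    using assms modq_eq_iff_dvd[of k q] modq_less[of q] unfolding k_def by (auto simp: mem_Xset_iff)
  have k': "z \<le> k'" "k' < q" "int q dvd int b' - int x - int k'"
    using assms modq_eq_iff_dvd[of k' q] modq_less[of q] unfolding k'_def by (auto simp: mem_Xset_iff)
  have eD: "e * D < z" "e' * D < z"
    using assms(7,8) unfolding D_def .
  have "int q dvd (int b - int (e * D)) - (int b' - int (e' * D))"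
    using assms(4,9) unfolding D_def by (simp add: modq_eq_modq_iff)
  moreover have "int (k - e * D) - int (k' - e' * D)
      = ((int b - int (e * D)) - (int b' - int (e' * D)))
        - (int b - int x - int k) + (int b' - int x - int k')"
    using eD k(1) k'(1) by (simp add: of_nat_diff)
  ultimately have "int q dvd int (k - e * D) - int (k' - e' * D)"
    using k(3) k'(3) by (metis dvd_add dvd_diff)
  then have "k - e * D = k' - e' * D"
    using k k' by (intro eq_of_dvd_diff) auto
  then have sum_eq: "k + e' * D = k' + e * D"
    using k k' eD by linarith
  have "\<not> e < e'" and "\<not> e' < e"
  proof -
    show "\<not> e < e'"
    proof
      assume "e < e'"
      then have "e * D + D \<le> e' * D"
        using mult_le_mono1[of "Suc e" e' D] by simp
      then show False
        using sum_eq k(1) k'(2) unfolding D_def by linarith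
    qed
    show "\<not> e' < e"
    proof
      assume "e' < e"
      then have "e' * D + D \<le> e * D"
        using mult_le_mono1[of "Suc e'" e D] by simp
      then show False
        using sum_eq k(2) k'(1) unfolding D_def by linarith
    qed
  qed
  then have ee: "e = e'"
    by simp
  then have "int b - int b' = (int b - int x - int k) - (int b' - int x - int k')"
    using sum_eq by simp
  then have "int q dvd int b - int b'"
    using k(3) k'(3) by (metis dvd_diff)
  then show ?thesis
    using ee assms(2,3) eq_of_dvd_diff by blast
qed

lemma rowsF_memD:
  "(a, e) \<in> rowsF q z m t \<Longrightarrow> length a = m \<and> (\<forall>l<m. a ! l < q) \<and> length e = t \<and> (\<forall>i<t. e ! i < Lpar q z)"
  unfolding rowsF_def by (auto simp: all_set_conv_all_nth)

lemma colsK_memD: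
  "(b, d) \<in> colsK q m t \<Longrightarrow>
    length b = t \<and> (\<forall>i<t. b ! i < q) \<and> length d = t \<and> sorted d \<and> distinct d \<and>
    set d \<subseteq> {..<m} \<and> (\<forall>i<t. d ! i < m)"
  unfolding colsK_def by (auto simp: all_set_conv_all_nth[of b] strict_sorted_iff)

lemma pent_eq_None_iff:
  "pent q z m t (a, e) (b, d) = None \<longleftrightarrow> (\<exists>i<t. a ! (d ! i) \<in> Xset q z (b ! i))"
  by (simp add: pent_def)

lemma pent_eq_Some_iff:
  assumes "(a, e) \<in> rowsF q z m t" "(b, d) \<in> colsK q m t"
  shows "pent q z m t (a, e) (b, d) = Some s \<longleftrightarrow>
    (\<forall>i<t. a ! (d ! i) \<notin> Xset q z (b ! i)) \<and> length s = m + t \<and>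
    (\<forall>i<t. s ! (d ! i) = modq q (int (b ! i) - int (e ! i) * int (q - z))) \<and>
    (\<forall>l<m. l \<notin> set d \<longrightarrow> s ! l = a ! l) \<and>
    (\<forall>i<t. s ! (m + i) = modq q (int (a ! (d ! i)) - int (b ! i) - 1))"
    (is "_ \<longleftrightarrow> ?nostar \<and> ?entries s")
proof -
  have shape: "length a = m" "length d = t" "distinct d" "set d \<subseteq> {..<m}"
    using rowsF_memD[OF assms(1)] colsK_memD[OF assms(2)] by auto
  define G where "G = fold (\<lambda>i c. c[d ! i := modq q (int (b ! i) - int (e ! i) * int (q - z))]) [0..<t] a"
  define U where "U = map (\<lambda>i. modq q (int (a ! (d ! i)) - int (b ! i) - 1)) [0..<t]"
  have pent: "pent q z m t (a, e) (b, d) = (if ?nostar then Some (G @ U) else None)"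
    unfolding pent_def G_def U_def by auto
  have d: "i < t \<Longrightarrow> d ! i < m" for i
    using shape nth_mem[of i d] by (auto simp del: nth_mem)
  have "set [0..<t] = {..<t}" "inj_on ((!) d) {..<t}"
    using shape by (auto intro: inj_on_nth)
  then have G_in: "i < t \<Longrightarrow> G ! (d ! i) = modq q (int (b ! i) - int (e ! i) * int (q - z))" for i
    unfolding G_def using shape d by (intro nth_fold_list_update_in) auto
  have G_notin: "l \<notin> set d \<Longrightarrow> G ! l = a ! l" for l
    unfolding G_def using shape by (intro nth_fold_list_update_notin) (auto simp: in_set_conv_nth)
  have GU: "?entries (G @ U)"
    using shape d G_in G_notin by (auto simp: nth_append U_def G_def)
  have "?entries s \<longleftrightarrow> s = G @ U"
  proof
    assume s: "?entries s"
    show "s = G @ U"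
    proof (rule nth_equalityI)
      show "length s = length (G @ U)"
        using s GU by simp
      fix l assume "l < length s"
      then consider "l < m" "l \<in> set d" | "l < m" "l \<notin> set d" | i where "i < t" "l = m + i"
        using s by (metis add_diff_inverse_nat nat_add_left_cancel_less not_less)
      then show "s ! l = (G @ U) ! l"
        by cases (use s GU shape in \<open>auto simp: in_set_conv_nth\<close>)
    qed
  qed (use GU in simp)
  then show ?thesis
    unfolding pent by auto
qed

lemma rowsF_eq:
  "rowsF q z m t = {a. set a \<subseteq> {..<q} \<and> length a = m} \<times> {e. set e \<subseteq> {..<Lpar q z} \<and> length e = t}"
  unfolding rowsF_def by auto

lemma colsK_eq:
  "colsK q m t = {b. set b \<subseteq> {..<q} \<and> length b = t} \<times> {d. sorted_wrt (<) d \<and> length d = t \<and> set d \<subseteq> {..<m}}"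
  unfolding colsK_def by auto

lemma finite_rowsF: "finite (rowsF q z m t)"
  unfolding rowsF_eq by (simp add: finite_lists_length_eq)

lemma card_rowsF: "card (rowsF q z m t) = Lpar q z ^ t * q ^ m"
  unfolding rowsF_eq by (simp add: card_cartesian_product card_lists_length_eq)

lemma finite_colsK: "finite (colsK q m t)"
proof -
  have "{d. sorted_wrt (<) d \<and> length d = t \<and> set d \<subseteq> {..<m}} \<subseteq> {d. set d \<subseteq> {..<m} \<and> length d = t}"
    by auto
  then have "finite {d. sorted_wrt (<) d \<and> length d = t \<and> set d \<subseteq> {..<m}}"
    by (rule finite_subset) (simp add: finite_lists_length_eq)
  then show ?thesis
    unfolding colsK_eq by (simp add: finite_lists_length_eq)
qed

lemma card_colsK: "card (colsK q m t) = (m choose t) * q ^ t"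
  unfolding colsK_eq by (simp add: card_cartesian_product card_lists_length_eq card_strict_sorted_lists)

lemma card_star_rows:
  assumes "z < q" and col: "(b, d) \<in> colsK q m t"
  shows "card {j \<in> rowsF q z m t. pent q z m t j (b, d) = None}
    = Lpar q z ^ t * (q ^ m - q ^ (m - t) * (q - z) ^ t)"
proof -
  have d: "length d = t" "distinct d" "set d \<subseteq> {..<m}"
    using col by (auto simp: colsK_def strict_sorted_iff)
  define A where "A l = {x. x < q \<and> (\<forall>i<t. d ! i = l \<longrightarrow> x \<notin> Xset q z (b ! i))}" for l
  define Es where "Es = {e. set e \<subseteq> {..<Lpar q z} \<and> length e = t}"
  have d_less: "d ! i < m" if "i < t" for i
    using d that nth_mem[of i d] by (auto simp del: nth_mem)
  have nonstar_sub: "listset (map A [0..<m]) \<times> Es \<subseteq> rowsF q z m t"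
    unfolding rowsF_eq Es_def A_def by (auto simp: mem_listset_iff in_set_conv_nth)
  have star_iff: "pent q z m t (a, e) (b, d) = None \<longleftrightarrow> (a, e) \<notin> listset (map A [0..<m]) \<times> Es"
    if "(a, e) \<in> rowsF q z m t" for a e
  proof -
    have "length a = m" "\<forall>l<m. a ! l < q" "e \<in> Es"
      using that unfolding rowsF_def Es_def by (auto simp: all_set_conv_all_nth[of a])
    then show ?thesis
      unfolding pent_eq_None_iff A_def using d_less by (auto simp: mem_listset_iff)
  qed
  have star: "{j \<in> rowsF q z m t. pent q z m t j (b, d) = None} = rowsF q z m t - listset (map A [0..<m]) \<times> Es"
    using star_iff by auto
  have card_A: "card (A l) = (if l \<in> set d then q - z else q)" if "l < m" for l
  proof (cases "l \<in> set d")
    case True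
    then obtain i where i: "i < t" "l = d ! i"
      using d by (auto simp: in_set_conv_nth)
    then have "A l = {..<q} - Xset q z (b ! i)"
      using d by (auto simp: A_def nth_eq_iff_index_eq)
    then show ?thesis
      using True assms Xset_subset[of q z "b ! i"] card_Xset[of z q "b ! i"]
      by (simp add: card_Diff_subset finite_subset)
  next
    case False
    then have "A l = {..<q}"
      using d by (auto simp: A_def)
    then show ?thesis
      using False by simp
  qed
  have "card (listset (map A [0..<m])) = (\<Prod>l\<in>{0..<m}. if l \<in> set d then q - z else q)"
    using card_A by (simp add: card_listset prod.distinct_set_conv_list[symmetric] comp_def)
  also have "\<dots> = (q - z) ^ card (set d) * q ^ card ({0..<m} - set d)"
    using d by (simp add: prod.If_cases Int_absorb1 Diff_eq atLeast0LessThan)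
  also have "\<dots> = q ^ (m - t) * (q - z) ^ t"
    using d by (simp add: distinct_card card_Diff_subset atLeast0LessThan)
  finally have "card (listset (map A [0..<m]) \<times> Es) = Lpar q z ^ t * (q ^ (m - t) * (q - z) ^ t)"
    by (simp add: card_cartesian_product card_lists_length_eq Es_def)
  then show ?thesis
    unfolding star using nonstar_sub finite_rowsF
    by (simp add: card_Diff_subset finite_subset card_rowsF diff_mult_distrib2)
qed

lemma pent_same_symbol_same_positions:
  assumes "z < q"
    and row: "(a, e) \<in> rowsF q z m t" and row': "(a', e') \<in> rowsF q z m t"
    and col: "(b, d) \<in> colsK q m t" and col': "(b', d') \<in> colsK q m t"
    and s: "pent q z m t (a, e) (b, d) = Some s" and s': "pent q z m t (a', e') (b', d') = Some s"
    and cross: "pent q z m t (a, e) (b', d') \<noteq> None"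
  shows "d' = d"
proof -
  note c = colsK_memD[OF col] and c' = colsK_memD[OF col']
  have other: "\<forall>l<m. l \<notin> set d \<longrightarrow> s ! l = a ! l"
    using s by (simp add: pent_eq_Some_iff[OF row col])
  have shift': "\<forall>i<t. s ! (d' ! i) = modq q (int (b' ! i) - int (e' ! i) * int (q - z))"
    using s' by (simp add: pent_eq_Some_iff[OF row' col'])
  have nostar_cross: "\<forall>i<t. a ! (d' ! i) \<notin> Xset q z (b' ! i)"
    using cross by (simp add: pent_eq_None_iff)
  have "set d' \<subseteq> set d"
  proof
    fix l assume "l \<in> set d'"
    then obtain j where j: "j < t" "l = d' ! j"
      using c' by (auto simp: in_set_conv_nth)
    show "l \<in> set d"
    proof (rule ccontr)
      assume "l \<notin> set d"
      moreover have "l < m"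
        using c' \<open>l \<in> set d'\<close> by auto
      ultimately have "a ! (d' ! j) = modq q (int (b' ! j) - int (e' ! j) * int (q - z))"
        using other shift' j c' by auto
      moreover have "e' ! j * (q - z) < z"
        using rowsF_memD[OF row'] j \<open>z < q\<close> by (auto intro: mult_less_of_less_Lpar)
      ultimately show False
        using nostar_cross shift_mem_Xset j by auto
    qed
  qed
  moreover have "card (set d') = card (set d)"
    using c c' by (simp add: distinct_card)
  ultimately show ?thesis
    using c c' by (metis card_subset_eq finite_set sorted_distinct_set_unique)
qed

lemma pent_same_symbol:
  assumes "z < q"
    and row: "(a, e) \<in> rowsF q z m t" and row': "(a', e') \<in> rowsF q z m t"
    and col: "(b, d) \<in> colsK q m t" and col': "(b', d') \<in> colsK q m t"
    and s: "pent q z m t (a, e) (b, d) = Some s" and s': "pent q z m t (a', e') (b', d') = Some s"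
    and cross: "pent q z m t (a, e) (b', d') \<noteq> None"
  shows "(a, e) = (a', e') \<and> (b, d) = (b', d')"
proof -
  note r = rowsF_memD[OF row] and r' = rowsF_memD[OF row'] and c = colsK_memD[OF col] and c' = colsK_memD[OF col']
  have nostar: "\<forall>i<t. a ! (d ! i) \<notin> Xset q z (b ! i)"
    and shift: "\<forall>i<t. s ! (d ! i) = modq q (int (b ! i) - int (e ! i) * int (q - z))"
    and other: "\<forall>l<m. l \<notin> set d \<longrightarrow> s ! l = a ! l"
    and deliv: "\<forall>i<t. s ! (m + i) = modq q (int (a ! (d ! i)) - int (b ! i) - 1)"
    using s by (simp_all add: pent_eq_Some_iff[OF row col])
  have shift': "\<forall>i<t. s ! (d' ! i) = modq q (int (b' ! i) - int (e' ! i) * int (q - z))"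
    and other': "\<forall>l<m. l \<notin> set d' \<longrightarrow> s ! l = a' ! l"
    and deliv': "\<forall>i<t. s ! (m + i) = modq q (int (a' ! (d' ! i)) - int (b' ! i) - 1)"
    using s' by (simp_all add: pent_eq_Some_iff[OF row' col'])
  have nostar_cross: "\<forall>i<t. a ! (d' ! i) \<notin> Xset q z (b' ! i)"
    using cross by (simp add: pent_eq_None_iff)
  have eD: "e ! i * (q - z) < z" "e' ! i * (q - z) < z" if "i < t" for i
    using that r r' \<open>z < q\<close> by (auto intro: mult_less_of_less_Lpar)
  have dd: "d' = d"
    using pent_same_symbol_same_positions[OF assms] .
  have be: "b ! i = b' ! i \<and> e ! i = e' ! i" if i: "i < t" for i
  proof (rule shift_inj)
    show "a ! (d ! i) < q" "b ! i < q" "b' ! i < q"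
      using r c c' i by auto
  qed (use assms(1) nostar nostar_cross shift shift' eD i dd in auto)
  have "b = b'" "e = e'"
    using be r r' c c' by (auto intro: nth_equalityI)
  moreover have "a = a'"
  proof (rule nth_equalityI)
    show "length a = length a'"
      using r r' by simp
    fix l assume "l < length a"
    then have l: "l < m"
      using r by simp
    show "a ! l = a' ! l"
    proof (cases "l \<in> set d")
      case True
      then obtain i where i: "i < t" "l = d ! i"
        using c by (auto simp: in_set_conv_nth)
      then have "modq q (int (a ! l) - (int (b ! i) + 1)) = modq q (int (a' ! l) - (int (b ! i) + 1))"
        using deliv deliv' dd \<open>b = b'\<close> by (simp add: diff_diff_eq)
      then show ?thesis
        using r r' l \<open>z < q\<close> by (auto simp: modq_eq_modq_iff dest: eq_of_dvd_diff)
    next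
      case False
      then show ?thesis
        using other other' dd l by simp
    qed
  qed
  ultimately show ?thesis
    using dd by simp
qed

lemma pent_symbols:
  assumes "0 < z" "z < q" "t \<le> m"
  shows "{s. \<exists>j\<in>rowsF q z m t. \<exists>k\<in>colsK q m t. pent q z m t j k = Some s}
    = (\<lambda>(F, U). F @ U) ` ({F. set F \<subseteq> {..<q} \<and> length F = m} \<times> {U. set U \<subseteq> {..<q - z} \<and> length U = t})"
    (is "?symbols = (\<lambda>(F, U). F @ U) ` (?Fs \<times> ?Us)")
proof (intro equalityI subsetI)
  fix s assume "s \<in> ?symbols"
  then obtain a e b d where row: "(a, e) \<in> rowsF q z m t" and col: "(b, d) \<in> colsK q m t"
    and s: "pent q z m t (a, e) (b, d) = Some s"
    by auto
  note r = rowsF_memD[OF row] and c = colsK_memD[OF col]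
  note S = s[unfolded pent_eq_Some_iff[OF row col]]
  have "take m s \<in> ?Fs"
  proof -
    have "s ! l < q" if "l < m" for l
    proof (cases "l \<in> set d")
      case True
      then show ?thesis
        using S c assms by (auto simp: in_set_conv_nth modq_less)
    qed (use S r that in auto)
    then show ?thesis
      using S by (auto simp: in_set_conv_nth)
  qed
  moreover have "drop m s \<in> ?Us"
    using S r c assms by (auto simp: in_set_conv_nth notin_Xset_iff)
  ultimately show "s \<in> (\<lambda>(F, U). F @ U) ` (?Fs \<times> ?Us)"
    by (auto intro!: image_eqI[of _ _ "(take m s, drop m s)"])
next
  fix s assume "s \<in> (\<lambda>(F, U). F @ U) ` (?Fs \<times> ?Us)"
  then obtain F U where F: "set F \<subseteq> {..<q}" "length F = m" and U: "set U \<subseteq> {..<q - z}" "length U = t"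
    and s: "s = F @ U"
    by auto
  txt \<open>Realise \<open>F @ U\<close> with \<open>\<delta> = [0..<t]\<close>, \<open>\<epsilon> = 0\<close> and \<open>b = take t F\<close>, putting
    \<open>a ! i = U ! i + F ! i + 1\<close> on \<open>\<delta>\<close> so that the appended differences are \<open>U\<close>.\<close>
  define a where "a = map (\<lambda>l. if l < t then modq q (int (U ! l) + int (F ! l) + 1) else F ! l) [0..<m]"
  have Fq: "F ! l < q" if "l < m" for l
    using F that nth_mem[of l F] by (auto simp del: nth_mem)
  have Uq: "U ! i < q - z" if "i < t" for i
    using U that nth_mem[of i U] by (auto simp del: nth_mem)
  have row: "(a, replicate t 0) \<in> rowsF q z m t"
    using assms F Fq Lpar_pos[of z q] modq_less[of q] unfolding rowsF_def a_def by (auto simp: in_set_conv_nth)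
  have col: "(take t F, [0..<t]) \<in> colsK q m t"
    using assms F unfolding colsK_def by (auto dest: in_set_takeD)
  have deliv: "modq q (int (a ! i) - int (F ! i) - 1) = U ! i" if "i < t" for i
    using that assms Uq[OF that] modq_add_Suc_diff_cancel[of "U ! i" q "F ! i"] unfolding a_def by auto
  have "pent q z m t (a, replicate t 0) (take t F, [0..<t]) = Some s"
    unfolding pent_eq_Some_iff[OF row col]
    using assms F U Fq Uq deliv by (auto simp: s nth_append notin_Xset_iff a_def modq_less)
  then show "s \<in> ?symbols"
    using row col by blast
qed

lemma card_pent_symbols:
  assumes "0 < z" "z < q" "t \<le> m"
  shows "card {s. \<exists>j\<in>rowsF q z m t. \<exists>k\<in>colsK q m t. pent q z m t j k = Some s} = (q - z) ^ t * q ^ m"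
proof -
  have "inj_on (\<lambda>(F, U). F @ U) ({F. set F \<subseteq> {..<q} \<and> length F = m} \<times> {U. set U \<subseteq> {..<q - z} \<and> length U = t})"
    (is "inj_on _ (?Fs \<times> ?Us)")
  proof (rule inj_onI)
    fix x y
    assume "x \<in> ?Fs \<times> ?Us" "y \<in> ?Fs \<times> ?Us" "(\<lambda>(F, U). F @ U) x = (\<lambda>(F, U). F @ U) y"
    then show "x = y"
      by (cases x; cases y) (simp add: append_eq_append_conv)
  qed
  then show ?thesis
    unfolding pent_symbols[OF assms]
    by (simp add: card_image card_cartesian_product card_lists_length_eq)
qed

lemma pent_delivery:
  assumes "z < q"
    and j: "j1 \<in> rowsF q z m t" "j2 \<in> rowsF q z m t" and k: "k1 \<in> colsK q m t" "k2 \<in> colsK q m t"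
    and s: "pent q z m t j1 k1 = Some s" "pent q z m t j2 k2 = Some s"
    and "(j1, k1) \<noteq> (j2, k2)"
  shows "j1 \<noteq> j2 \<and> k1 \<noteq> k2 \<and> pent q z m t j1 k2 = None \<and> pent q z m t j2 k1 = None"
proof -
  have cross: "pent q z m t j k' = None"
    if "j \<in> rowsF q z m t" "j' \<in> rowsF q z m t" "k \<in> colsK q m t" "k' \<in> colsK q m t"
      "pent q z m t j k = Some s" "pent q z m t j' k' = Some s" "(j, k) \<noteq> (j', k')" for j j' k k'
  proof (rule ccontr)
    obtain a e a' e' b d b' d' where eqs: "j = (a, e)" "j' = (a', e')" "k = (b, d)" "k' = (b', d')"
      by (cases j, cases j', cases k, cases k')
    assume "pent q z m t j k' \<noteq> None"
    then have "j = j' \<and> k = k'"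
      using pent_same_symbol[OF \<open>z < q\<close>, of a e m t a' e' b d b' d' s] that unfolding eqs by blast
    then show False
      using that(7) by blast
  qed
  have "pent q z m t j1 k2 = None" "pent q z m t j2 k1 = None"
    using cross[OF j k s] cross[OF j(2,1) k(2,1) s(2,1)] assms(8) by auto
  then show ?thesis
    using s by auto
qed

lemma memory_ratio_eq:
  fixes L q z m t :: nat
  assumes "0 < L" "0 < q" "z \<le> q" "t \<le> m"
  shows "real (L ^ t * (q ^ m - q ^ (m - t) * (q - z) ^ t)) / real (L ^ t * q ^ m)
    = 1 - ((real q - real z) / real q) ^ t"
proof -
  define c where "c = real L ^ t * real q ^ (m - t)"
  have qm: "q ^ m = q ^ (m - t) * q ^ t"
    using assms(4) by (simp flip: power_add)
  have "q ^ (m - t) * (q - z) ^ t \<le> q ^ m"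
    unfolding qm by (simp add: power_mono)
  then have "real (L ^ t * (q ^ m - q ^ (m - t) * (q - z) ^ t)) / real (L ^ t * q ^ m)
      = (c * (real q ^ t - (real q - real z) ^ t)) / (c * real q ^ t)"
    using assms unfolding c_def by (simp add: qm of_nat_diff algebra_simps)
  also have "\<dots> = 1 - (real q - real z) ^ t / real q ^ t"
    using assms unfolding c_def by (simp add: diff_divide_distrib)
  also have "\<dots> = 1 - ((real q - real z) / real q) ^ t"
    by (simp only: power_divide)
  finally show ?thesis .
qed

lemma rate_ratio_eq:
  fixes L q z m t :: nat
  assumes "0 < L" "0 < q" "z \<le> q"
  shows "real ((q - z) ^ t * q ^ m) / real (L ^ t * q ^ m) = (real q - real z) ^ t / real L ^ t"
  using assms by (simp add: of_nat_diff)

theorem theorem2: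
  fixes q z m t :: nat
  assumes "0 < q" "0 < z" "0 < m" "0 < t" "2 \<le> q" "z < q" "t < m"
  shows "is_PDA (rowsF q z m t) (colsK q m t) (pent q z m t)
           ((m choose t) * q ^ t)
           (Lpar q z ^ t * q ^ m)
           (Lpar q z ^ t * (q ^ m - q ^ (m - t) * (q - z) ^ t))
           ((q - z) ^ t * q ^ m)
       \<and> real (Lpar q z ^ t * (q ^ m - q ^ (m - t) * (q - z) ^ t)) / real (Lpar q z ^ t * q ^ m)
           = 1 - ((real q - real z) / real q) ^ t
       \<and> real ((q - z) ^ t * q ^ m) / real (Lpar q z ^ t * q ^ m)
           = (real q - real z) ^ t / real (Lpar q z) ^ t"
proof -
  have L: "0 < Lpar q z"
    using assms by (simp add: Lpar_pos)
  have "\<forall>k\<in>colsK q m t. card {j \<in> rowsF q z m t. pent q z m t j k = None}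
      = Lpar q z ^ t * (q ^ m - q ^ (m - t) * (q - z) ^ t)"
    using card_star_rows[OF \<open>z < q\<close>] by auto
  moreover have "card {s. \<exists>j\<in>rowsF q z m t. \<exists>k\<in>colsK q m t. pent q z m t j k = Some s} = (q - z) ^ t * q ^ m"
    using assms by (simp add: card_pent_symbols)
  ultimately have "is_PDA (rowsF q z m t) (colsK q m t) (pent q z m t)
      ((m choose t) * q ^ t) (Lpar q z ^ t * q ^ m)
      (Lpar q z ^ t * (q ^ m - q ^ (m - t) * (q - z) ^ t)) ((q - z) ^ t * q ^ m)"
    unfolding is_PDA_def
    using finite_rowsF[of q z m t] finite_colsK[of q m t] card_rowsF[of q z m t] card_colsK[of q m t]
      pent_delivery[OF \<open>z < q\<close>, of _ m t]
    by blast
  then show ?thesis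
    using assms L by (intro conjI memory_ratio_eq rate_ratio_eq) auto
qed

end
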